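(* Let $n\ge1$, let $a,b$ be positive integers, and let $G$ be a multigraph on $V=\{0,1,\ldots,n\}$ obtained from the complete multigraph $K_{n+1}^{a,b}$ by deleting some (possibly none) of the edges incident to the root $0$; i.e. $G$ has adjacency matrix $[a_{ij}]$ with $a_{0i}=a_{i0}=a_i$ for integers $0\le a_i\le a$ ($i\in[n]$), $a_{ij}=b$ for distinct $i,j\in[n]$, and $a_{ii}=0$. Then $$\dim_{\mathbb K}\left(R_n/\mathcal{M}_G^{(1)}\right)=\det\widetilde Q_G.$$
   Context: $\mathbb K$ is a field, $R_n=\mathbb K[x_1,\ldots,x_n]$. The complete multigraph $K_{n+1}^{a,b}$ on $V$ has $a$ edges between $0$ and each $i\in[n]$ and $b$ edges between each pair of distinct $i,j\in[n]$, no loops. For a loopless multigraph $G$ on $V$ with adjacency matrix $[a_{ij}]$ and $\emptyset\ne A\subseteq[n]$, put $d_A(i)=\sum_{j\in V\setminus A}a_{ij}$ for $i\in A$, $m_A=\prod_{i\in A}x_i^{d_A(i)}$, and $\mathcal{M}_G^{(1)}=\langle m_A:\emptyset\ne A\subseteq[n],\ |A|\le2\rangle$ (explicitly generated by $x_i^{d_i}$ and $x_i^{d_i-a_{ij}}x_j^{d_j-a_{ij}}$ for $i\ne j$ in $[n]$, where $d_i=\sum_{j\in V}a_{ij}$). The truncated signless Laplace matrix $\widetilde Q_G$ is the $n\times n$ matrix indexed by $[n]$ with diagonal entries $d_i$ and off-diagonal entries $a_{ij}$. *)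

theory Defs
  imports "HOL-Library.Poly_Mapping" "Jordan_Normal_Form.Determinant"
begin

text \<open>Multivariate polynomials over a field: a polynomial is a finitely supported
  map from monomials (exponent vectors, nat =>0 nat, variable x_i has index i)
  to coefficients; multiplication is the convolution product of Poly_Mapping.\<close>

type_synonym 'k mpoly = "(nat \<Rightarrow>\<^sub>0 nat) \<Rightarrow>\<^sub>0 'k"

text \<open>R_n = K[x_1,...,x_n]: polynomials only involving the variables 1..n.\<close>
definition polyring :: "nat \<Rightarrow> 'k::field mpoly set" where
  "polyring n = {p. \<forall>m \<in> Poly_Mapping.keys p. Poly_Mapping.keys m \<subseteq> {1..n}}"

definition const :: "'k::field \<Rightarrow> 'k mpoly" where
  "const c = Poly_Mapping.single 0 c"

definition monom :: "(nat \<Rightarrow>\<^sub>0 nat) \<Rightarrow> 'k::field mpoly" where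
  "monom e = Poly_Mapping.single e 1"

inductive_set ideal_gen :: "nat \<Rightarrow> 'k::field mpoly set \<Rightarrow> 'k mpoly set"
  for n :: nat and S :: "'k mpoly set" where
  zero: "0 \<in> ideal_gen n S"
| gen: "g \<in> S \<Longrightarrow> g \<in> ideal_gen n S"
| add: "p \<in> ideal_gen n S \<Longrightarrow> q \<in> ideal_gen n S \<Longrightarrow> p + q \<in> ideal_gen n S"
| mult: "r \<in> polyring n \<Longrightarrow> p \<in> ideal_gen n S \<Longrightarrow> r * p \<in> ideal_gen n S"

text \<open>dim_K (R_n / I) = d: there is a set B of d polynomials of R_n whose residue
  classes form a K-basis of R_n / I (linearly independent modulo I and spanning modulo I).\<close>
definition quot_dim_eq :: "nat \<Rightarrow> 'k::field mpoly set \<Rightarrow> nat \<Rightarrow> bool" where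
  "quot_dim_eq n I d \<longleftrightarrow>
     (\<exists>B. finite B \<and> card B = d \<and> B \<subseteq> polyring n \<and>
        (\<forall>c. (\<Sum>b\<in>B. const (c b) * b) \<in> I \<longrightarrow> (\<forall>b\<in>B. c b = 0)) \<and>
        (\<forall>p \<in> polyring n. \<exists>c. p - (\<Sum>b\<in>B. const (c b) * b) \<in> I))"

text \<open>Multigraphs on V = {0..n} given by adjacency matrix adj (values only used on V).\<close>
definition degA :: "nat \<Rightarrow> (nat \<Rightarrow> nat \<Rightarrow> nat) \<Rightarrow> nat set \<Rightarrow> nat \<Rightarrow> nat" where
  "degA n adj A i = (\<Sum>j\<in>{0..n} - A. adj i j)"

definition mA :: "nat \<Rightarrow> (nat \<Rightarrow> nat \<Rightarrow> nat) \<Rightarrow> nat set \<Rightarrow> 'k::field mpoly" where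
  "mA n adj A = monom (\<Sum>i\<in>A. Poly_Mapping.single i (degA n adj A i))"

definition M1 :: "nat \<Rightarrow> (nat \<Rightarrow> nat \<Rightarrow> nat) \<Rightarrow> 'k::field mpoly set" where
  "M1 n adj = ideal_gen n {mA n adj A | A. A \<noteq> {} \<and> A \<subseteq> {1..n} \<and> card A \<le> 2}"

text \<open>Truncated signless Laplace matrix, indexed by [n]; row/column k of the
  matrix (0-based) corresponds to vertex k+1.\<close>
definition trunc_Q :: "nat \<Rightarrow> (nat \<Rightarrow> nat \<Rightarrow> nat) \<Rightarrow> int mat" where
  "trunc_Q n adj = mat n n (\<lambda>(k, l).
     if k = l then int (\<Sum>j\<in>{0..n}. adj (k+1) j) else int (adj (k+1) (l+1)))"

end

theory Submission
  imports Defs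
begin

text \<open>The generators of \<open>M1\<close> are monomials, so the residues of the monomials outside the
  ideal (the standard monomials) form a basis of the quotient. Writing \<open>d i\<close> for the degree of
  vertex \<open>i\<close>, the monomial \<open>x^e\<close> is standard iff \<open>e i < d i\<close> for every \<open>i\<close> and
  \<open>e i \<ge> d i - b\<close> for at most one \<open>i\<close>. Counting these vectors gives
  \<open>\<Prod>i. (d i - b) + b * (\<Sum>i. \<Prod>j\<noteq>i. (d j - b))\<close>, which is the determinant of the truncated
  signless Laplacian \<open>diag (d i - b) + b J\<close>, obtained by expanding along the last row.\<close>

section \<open>Determinant of a diagonal plus constant matrix\<close>

definition diag_plus_const_mat :: "nat \<Rightarrow> (nat \<Rightarrow> 'a) \<Rightarrow> 'a \<Rightarrow> 'a::comm_ring_1 mat" where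
  "diag_plus_const_mat n t c = mat n n (\<lambda>(k, l). if k = l then t k + c else c)"

lemma det_last_row_single_entry:
  fixes A :: "'a::comm_ring_1 mat"
  assumes A: "A \<in> carrier_mat (Suc n) (Suc n)" and zero: "\<And>j. j < n \<Longrightarrow> A $$ (n, j) = 0"
  shows "det A = A $$ (n, n) * det (mat_delete A n n)"
proof -
  have "det A = (\<Sum>j<Suc n. A $$ (n, j) * cofactor A n j)"
    using A by (rule laplace_expansion_row) simp
  also have "\<dots> = A $$ (n, n) * cofactor A n n"
    using zero by (simp add: lessThan_Suc)
  finally show ?thesis by (simp add: cofactor_def)
qed

lemma det_const_last_row:
  fixes t :: "nat \<Rightarrow> 'a::comm_ring_1"
  shows "det (mat (Suc n) (Suc n) (\<lambda>(i, j). if i = n \<or> i \<noteq> j then c else t i + c))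
    = c * (\<Prod>k<n. t k)"
proof -
  define E :: "'a mat" where
    "E = mat (Suc n) (Suc n) (\<lambda>(i, j). if i = j \<or> j = n then 1 else 0)"
  \<comment> \<open>E adds the last row to every other row; N is lower triangular.\<close>
  define N :: "'a mat" where
    "N = mat (Suc n) (Suc n) (\<lambda>(i, j). if i = n then c else if i = j then t i else 0)"
  have "mat (Suc n) (Suc n) (\<lambda>(i, j). if i = n \<or> i \<noteq> j then c else t i + c) = E * N"
  proof (rule eq_matI)
    fix i j assume "i < dim_row (E * N)" "j < dim_col (E * N)"
    hence i: "i < Suc n" and j: "j < Suc n" by (auto simp: E_def N_def)
    have "(E * N) $$ (i, j) = (\<Sum>m<Suc n. E $$ (i, m) * N $$ (m, j))"
      using i j by (simp add: E_def N_def scalar_prod_def lessThan_atLeast0)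
    also have "\<dots> = (\<Sum>m<Suc n. (if m = i then N $$ (i, j) else 0)
                       + (if m = n \<and> i \<noteq> n then N $$ (n, j) else 0))"
      using i j by (intro sum.cong) (auto simp: E_def N_def)
    also have "\<dots> = N $$ (i, j) + (if i \<noteq> n then N $$ (n, j) else 0)"
      using i by (simp add: sum.distrib)
    finally show "mat (Suc n) (Suc n) (\<lambda>(i, j). if i = n \<or> i \<noteq> j then c else t i + c) $$ (i, j)
      = (E * N) $$ (i, j)"
      using i j by (auto simp: N_def)
  qed (auto simp: E_def N_def)
  moreover have "det E = 1"
    by (subst det_upper_triangular[of _ "Suc n"])
       (auto simp: E_def prod_list_diag_prod intro!: upper_triangularI)
  moreover have "det N = c * (\<Prod>k<n. t k)"
    by (subst det_lower_triangular[of "Suc n"])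
       (auto simp: N_def prod_list_diag_prod lessThan_atLeast0[symmetric] lessThan_Suc intro!: prod.cong)
  moreover have "det (E * N) = det E * det N"
    by (rule det_mult[of _ "Suc n"]) (auto simp: E_def N_def)
  ultimately show ?thesis by simp
qed

lemma det_diag_plus_const_mat:
  "det (diag_plus_const_mat n t c) = (\<Prod>k<n. t k) + c * (\<Sum>i<n. \<Prod>k\<in>{..<n} - {i}. t k)"
proof (induction n)
  case 0
  show ?case by (simp add: diag_plus_const_mat_def)
next
  case (Suc n)
  let ?A = "diag_plus_const_mat (Suc n) t c"
  let ?A_with_last_row = "\<lambda>v. mat\<^sub>r (Suc n) (Suc n) (\<lambda>i. if i = n then v else row ?A i)"
  define e where "e = t n \<cdot>\<^sub>v unit_vec (Suc n) n"
  define const where "const = vec (Suc n) (\<lambda>_. c)"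
  have "?A = ?A_with_last_row (e + const)"
    by (rule eq_matI) (auto simp: diag_plus_const_mat_def e_def const_def unit_vec_def)
  hence "det ?A = det (?A_with_last_row (e + const))"
    by (rule arg_cong)
  also have "\<dots> = det (?A_with_last_row e) + det (?A_with_last_row const)"
    by (rule det_row_add[where a = "\<lambda>_. e" and b = "\<lambda>_. const"])
       (auto simp: e_def const_def diag_plus_const_mat_def)
  also have "det (?A_with_last_row e) = t n * det (diag_plus_const_mat n t c)"
  proof -
    have "mat_delete (?A_with_last_row e) n n = diag_plus_const_mat n t c"
      by (rule eq_matI) (auto simp: mat_delete_def diag_plus_const_mat_def)
    thus ?thesis
      by (subst det_last_row_single_entry) (auto simp: e_def unit_vec_def)
  qed
  also have "?A_with_last_row const
      = mat (Suc n) (Suc n) (\<lambda>(i, j). if i = n \<or> i \<noteq> j then c else t i + c)"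
    by (rule eq_matI) (auto simp: const_def diag_plus_const_mat_def)
  also have "det \<dots> = c * (\<Prod>k<n. t k)"
    by (rule det_const_last_row)
  also have "t n * det (diag_plus_const_mat n t c) + c * (\<Prod>k<n. t k)
      = (\<Prod>k<Suc n. t k) + c * (t n * (\<Sum>i<n. \<Prod>k\<in>{..<n} - {i}. t k) + (\<Prod>k<n. t k))"
    by (simp add: Suc.IH algebra_simps)
  also have "t n * (\<Sum>i<n. \<Prod>k\<in>{..<n} - {i}. t k) + (\<Prod>k<n. t k)
      = (\<Sum>i<Suc n. \<Prod>k\<in>{..<Suc n} - {i}. t k)"
  proof -
    have "{..<Suc n} - {i} = insert n ({..<n} - {i})" if "i < n" for i
      using that by auto
    moreover have "{..<Suc n} - {n} = {..<n}" by auto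
    ultimately show ?thesis by (simp add: sum_distrib_left)
  qed
  finally show ?case .
qed

section \<open>Box points with at most one large coordinate\<close>

definition at_most_one_large :: "'a set \<Rightarrow> ('a \<Rightarrow> nat) \<Rightarrow> ('a \<Rightarrow> nat) \<Rightarrow> ('a \<Rightarrow> nat) set" where
  "at_most_one_large I t d =
     {f \<in> PiE I (\<lambda>i. {..<d i}). \<forall>i\<in>I. \<forall>j\<in>I. i \<noteq> j \<longrightarrow> \<not> (t i \<le> f i \<and> t j \<le> f j)}"

lemma at_most_one_large_eq_Union:
  assumes "\<forall>i\<in>I. t i \<le> d i"
  shows "at_most_one_large I t d =
    PiE I (\<lambda>i. {..<t i}) \<union> (\<Union>i\<in>I. PiE I (\<lambda>j. if j = i then {t i..<d i} else {..<t j}))"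
proof (intro equalityI subsetI)
  fix f assume f: "f \<in> at_most_one_large I t d"
  show "f \<in> PiE I (\<lambda>i. {..<t i}) \<union> (\<Union>i\<in>I. PiE I (\<lambda>j. if j = i then {t i..<d i} else {..<t j}))"
  proof (cases "\<exists>i\<in>I. t i \<le> f i")
    case True
    then obtain i where "i \<in> I" "t i \<le> f i" by blast
    with f have "f \<in> PiE I (\<lambda>j. if j = i then {t i..<d i} else {..<t j})"
      by (auto simp: at_most_one_large_def PiE_iff not_le)
    with \<open>i \<in> I\<close> show ?thesis by blast
  next
    case False
    with f show ?thesis by (auto simp: at_most_one_large_def PiE_iff not_le)
  qed
next
  fix f
  assume "f \<in> PiE I (\<lambda>i. {..<t i}) \<union> (\<Union>i\<in>I. PiE I (\<lambda>j. if j = i then {t i..<d i} else {..<t j}))"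
  with assms show "f \<in> at_most_one_large I t d"
    by (auto simp: at_most_one_large_def PiE_iff split: if_splits) (metis leD order_less_le_trans)+
qed

lemma card_at_most_one_large:
  assumes "finite I" and "\<forall>i\<in>I. t i \<le> d i"
  shows "card (at_most_one_large I t d) = (\<Prod>i\<in>I. t i) + (\<Sum>i\<in>I. (d i - t i) * (\<Prod>j\<in>I - {i}. t j))"
proof -
  define one_large where "one_large i = PiE I (\<lambda>j. if j = i then {t i..<d i} else {..<t j})" for i
  have card_one_large: "card (one_large i) = (d i - t i) * (\<Prod>j\<in>I - {i}. t j)" if "i \<in> I" for i
  proof -
    have "card (one_large i) = (\<Prod>j\<in>I. card (if j = i then {t i..<d i} else {..<t j}))"
      using assms(1) by (simp add: one_large_def card_PiE)
    also have "\<dots> = (d i - t i) * (\<Prod>j\<in>I - {i}. card (if j = i then {t i..<d i} else {..<t j}))"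
      using assms(1) that by (simp add: prod.remove)
    finally show ?thesis by simp
  qed
  have "card (at_most_one_large I t d) = card (PiE I (\<lambda>i. {..<t i})) + card (\<Union>i\<in>I. one_large i)"
    unfolding at_most_one_large_eq_Union[OF assms(2)] one_large_def[symmetric]
    using assms(1) by (intro card_Un_disjoint)
      (auto simp: one_large_def PiE_iff finite_PiE, metis atLeastLessThan_iff not_le)
  also have "card (\<Union>i\<in>I. one_large i) = (\<Sum>i\<in>I. card (one_large i))"
    using assms(1) by (intro card_UN_disjoint)
      (auto simp: one_large_def PiE_iff finite_PiE, metis atLeastLessThan_iff lessThan_iff not_le)
  finally show ?thesis
    using assms(1) by (simp add: card_PiE card_one_large)
qed

lemma finite_at_most_one_large: "finite I \<Longrightarrow> finite (at_most_one_large I t d)"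
  by (rule finite_subset[of _ "PiE I (\<lambda>i. {..<d i})"]) (auto simp: at_most_one_large_def finite_PiE)

text \<open>For a single coordinate the truncated difference \<open>d i - c\<close> need not equal the integer
  difference; the count is then \<open>d i\<close> on both sides.\<close>

lemma int_card_at_most_one_large:
  assumes "finite I" and "\<forall>i\<in>I. I = {i} \<or> c \<le> d i"
  shows "int (card (at_most_one_large I (\<lambda>i. d i - c) d))
    = (\<Prod>i\<in>I. int (d i) - int c) + int c * (\<Sum>i\<in>I. \<Prod>j\<in>I - {i}. int (d j) - int c)"
proof (cases "\<exists>i. I = {i}")
  case True
  then obtain i where "I = {i}" by blast
  thus ?thesis by (simp add: card_at_most_one_large)
next
  case False
  with assms(2) have "\<forall>i\<in>I. c \<le> d i" by blast
  thus ?thesis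
    using assms(1) by (simp add: card_at_most_one_large of_nat_diff sum_distrib_left)
qed

section \<open>Standard monomials of a monomial ideal\<close>

definition standard_exps :: "nat \<Rightarrow> (nat \<Rightarrow>\<^sub>0 nat) set \<Rightarrow> (nat \<Rightarrow>\<^sub>0 nat) set" where
  "standard_exps n G =
     {e. Poly_Mapping.keys e \<subseteq> {1..n} \<and> (\<forall>g\<in>G. \<not> Poly_Mapping.lookup g \<le> Poly_Mapping.lookup e)}"

lemma const_mult_monom [simp]: "const c * (monom e :: 'k::field mpoly) = Poly_Mapping.single e c"
  by (simp add: const_def monom_def mult_single)

lemma inj_monom: "inj (monom :: _ \<Rightarrow> 'k::field mpoly)"
  by (rule injI) (metis keys_single monom_def one_neq_zero singleton_inject)

lemma sum_in_ideal_gen: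
  "(\<And>x. x \<in> X \<Longrightarrow> f x \<in> ideal_gen n S) \<Longrightarrow> sum f X \<in> ideal_gen n S"
  by (induction X rule: infinite_finite_induct) (auto intro: ideal_gen.intros)

lemma sum_single_lookup:
  assumes "finite A" "Poly_Mapping.keys p \<subseteq> A"
  shows "(\<Sum>e\<in>A. Poly_Mapping.single e (Poly_Mapping.lookup p e)) = p"
proof (rule poly_mapping_eqI)
  fix k
  show "Poly_Mapping.lookup (\<Sum>e\<in>A. Poly_Mapping.single e (Poly_Mapping.lookup p e)) k
    = Poly_Mapping.lookup p k"
    using assms by (auto simp: lookup_sum lookup_single when_def in_keys_iff)
qed

lemma keys_monomial_ideal_divisible:
  assumes "p \<in> ideal_gen n (monom ` G :: 'k::field mpoly set)" "m \<in> Poly_Mapping.keys p"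
  shows "\<exists>g\<in>G. Poly_Mapping.lookup g \<le> Poly_Mapping.lookup m"
  using assms
proof (induction arbitrary: m rule: ideal_gen.induct)
  case (gen p)
  thus ?case by (auto simp: monom_def)
next
  case (add p q)
  thus ?case using keys_add[of p q] by blast
next
  case (mult r p)
  then obtain x y where "m = x + y" "y \<in> Poly_Mapping.keys p"
    using keys_mult[of r p] by blast
  with mult.IH show ?case
    by (metis le_add_same_cancel2 lookup_add order.trans zero_le le_funI le_funD)
qed simp

lemma single_in_monomial_ideal:
  assumes "Poly_Mapping.keys e \<subseteq> {1..n}" "g \<in> G" "Poly_Mapping.lookup g \<le> Poly_Mapping.lookup e"
  shows "(Poly_Mapping.single e v :: 'k::field mpoly) \<in> ideal_gen n (monom ` G)"
proof -
  have "e = (e - g) + g"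
    using assms(3) by (intro poly_mapping_eqI) (simp add: lookup_add lookup_minus le_fun_def)
  hence "(Poly_Mapping.single e v :: 'k mpoly) = Poly_Mapping.single (e - g) v * monom g"
    by (simp add: monom_def mult_single)
  moreover have "(Poly_Mapping.single (e - g) v :: 'k mpoly) \<in> polyring n"
    using assms(1) keys_diff[of e g] by (auto simp: polyring_def in_keys_iff lookup_minus)
  ultimately show ?thesis
    using assms(2) by (auto intro: ideal_gen.mult ideal_gen.gen)
qed

lemma standard_monomials_independent:
  assumes "finite (standard_exps n G)"
    and "(\<Sum>e\<in>standard_exps n G. Poly_Mapping.single e (c e))
      \<in> ideal_gen n (monom ` G :: 'k::field mpoly set)"
    and "e \<in> standard_exps n G"
  shows "c e = 0"
proof (rule ccontr)
  assume "c e \<noteq> 0"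
  hence "e \<in> Poly_Mapping.keys (\<Sum>e\<in>standard_exps n G. Poly_Mapping.single e (c e))"
    using assms(1,3) by (simp add: in_keys_iff lookup_sum lookup_single when_def)
  then obtain g where "g \<in> G" "Poly_Mapping.lookup g \<le> Poly_Mapping.lookup e"
    using keys_monomial_ideal_divisible[OF assms(2)] by blast
  with assms(3) show False
    by (auto simp: standard_exps_def)
qed

lemma standard_monomials_span:
  fixes p :: "'k::field mpoly"
  assumes "finite (standard_exps n G)" and "p \<in> polyring n"
  shows "p - (\<Sum>e\<in>standard_exps n G. Poly_Mapping.single e (Poly_Mapping.lookup p e))
    \<in> ideal_gen n (monom ` G)"
proof -
  let ?Std = "standard_exps n G" and ?term = "\<lambda>e. Poly_Mapping.single e (Poly_Mapping.lookup p e)"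
  have "p = (\<Sum>e\<in>?Std \<union> (Poly_Mapping.keys p - ?Std). ?term e)"
    using assms(1) by (intro sum_single_lookup[symmetric]) auto
  also have "\<dots> = (\<Sum>e\<in>?Std. ?term e) + (\<Sum>e\<in>Poly_Mapping.keys p - ?Std. ?term e)"
    using assms(1) by (intro sum.union_disjoint) auto
  finally have "p - (\<Sum>e\<in>?Std. ?term e) = (\<Sum>e\<in>Poly_Mapping.keys p - ?Std. ?term e)"
    by (simp add: algebra_simps)
  also have "\<dots> \<in> ideal_gen n (monom ` G)"
  proof (rule sum_in_ideal_gen)
    fix e assume e: "e \<in> Poly_Mapping.keys p - ?Std"
    hence "Poly_Mapping.keys e \<subseteq> {1..n}"
      using assms(2) by (auto simp: polyring_def)
    with e obtain g where "g \<in> G" "Poly_Mapping.lookup g \<le> Poly_Mapping.lookup e"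
      by (auto simp: standard_exps_def)
    with \<open>Poly_Mapping.keys e \<subseteq> {1..n}\<close> show "?term e \<in> ideal_gen n (monom ` G)"
      by (rule single_in_monomial_ideal)
  qed
  finally show ?thesis .
qed

lemma quot_dim_eq_monomial_ideal:
  assumes "finite (standard_exps n G)"
  shows "quot_dim_eq n (ideal_gen n (monom ` G) :: 'k::field mpoly set) (card (standard_exps n G))"
proof -
  let ?Std = "standard_exps n G"
  let ?B = "monom ` ?Std :: 'k mpoly set" and ?I = "ideal_gen n (monom ` G) :: 'k mpoly set"
  have inj: "inj_on (monom :: _ \<Rightarrow> 'k mpoly) ?Std"
    using inj_monom by (rule inj_on_subset) simp
  have combination: "(\<Sum>b\<in>?B. const (c b) * b)
      = (\<Sum>e\<in>?Std. Poly_Mapping.single e (c (monom e :: 'k mpoly)))" for c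
    by (simp add: sum.reindex[OF inj])
  show ?thesis
    unfolding quot_dim_eq_def
  proof (intro exI[of _ "?B"] conjI allI impI ballI)
    show "finite ?B" "card ?B = card ?Std"
      using assms card_image[OF inj] by simp_all
    show "?B \<subseteq> polyring n"
      by (auto simp: polyring_def standard_exps_def monom_def)
  next
    fix c b
    assume "(\<Sum>b\<in>?B. const (c b) * b) \<in> ?I" and "b \<in> ?B"
    thus "c b = 0"
      using standard_monomials_independent[OF assms, of "\<lambda>e. c (monom e)"]
      by (auto simp: combination)
  next
    fix p :: "'k mpoly" assume "p \<in> polyring n"
    thus "\<exists>c. p - (\<Sum>b\<in>?B. const (c b) * b) \<in> ?I"
      using standard_monomials_span[OF assms] inj
      by (intro exI[of _ "\<lambda>b. Poly_Mapping.lookup p (inv_into ?Std monom b)"]) (simp add: combination)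
  qed
qed

lemma bij_betw_restrict_lookup:
  assumes "finite I"
  shows "bij_betw (\<lambda>e. restrict (Poly_Mapping.lookup e) I)
    {e :: 'a \<Rightarrow>\<^sub>0 nat. Poly_Mapping.keys e \<subseteq> I} (PiE I (\<lambda>_. UNIV))"
proof (rule bij_betwI')
  fix e e' :: "'a \<Rightarrow>\<^sub>0 nat"
  assume "e \<in> {e. Poly_Mapping.keys e \<subseteq> I}" "e' \<in> {e. Poly_Mapping.keys e \<subseteq> I}"
  thus "(restrict (Poly_Mapping.lookup e) I = restrict (Poly_Mapping.lookup e') I) = (e = e')"
    by (auto simp: fun_eq_iff poly_mapping_eq_iff restrict_def) (metis in_keys_iff subsetD)
next
  fix f :: "'a \<Rightarrow> nat" assume f: "f \<in> PiE I (\<lambda>_. UNIV)"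
  let ?e = "\<Sum>i\<in>I. Poly_Mapping.single i (f i)"
  have "Poly_Mapping.lookup ?e i = f i" if "i \<in> I" for i
    using assms that by (simp add: lookup_sum lookup_single when_def)
  with f have "restrict (Poly_Mapping.lookup ?e) I = f"
    by (auto simp: PiE_iff extensional_def restrict_def)
  moreover have "Poly_Mapping.keys ?e \<subseteq> I"
    using keys_sum[of "\<lambda>i. Poly_Mapping.single i (f i)" I] by (auto split: if_splits)
  ultimately show "\<exists>e\<in>{e. Poly_Mapping.keys e \<subseteq> I}. f = restrict (Poly_Mapping.lookup e) I"
    by auto
qed auto

section \<open>The ideal generated by the monomials \<open>m\<^sub>A\<close>, \<open>|A| \<le> 2\<close>\<close>

definition vertex_degree :: "nat \<Rightarrow> (nat \<Rightarrow> nat \<Rightarrow> nat) \<Rightarrow> nat \<Rightarrow> nat" where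
  "vertex_degree n adj i = (\<Sum>j\<in>{0..n}. adj i j)"

definition mA_exp :: "nat \<Rightarrow> (nat \<Rightarrow> nat \<Rightarrow> nat) \<Rightarrow> nat set \<Rightarrow> nat \<Rightarrow>\<^sub>0 nat" where
  "mA_exp n adj A = (\<Sum>i\<in>A. Poly_Mapping.single i (degA n adj A i))"

definition M1_exps :: "nat \<Rightarrow> (nat \<Rightarrow> nat \<Rightarrow> nat) \<Rightarrow> (nat \<Rightarrow>\<^sub>0 nat) set" where
  "M1_exps n adj = {mA_exp n adj A | A. A \<noteq> {} \<and> A \<subseteq> {1..n} \<and> card A \<le> 2}"

lemma M1_eq_monomial_ideal: "M1 n adj = ideal_gen n (monom ` M1_exps n adj)"
  unfolding M1_def M1_exps_def mA_def mA_exp_def by (rule arg_cong[where f = "ideal_gen n"]) blast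

lemma lookup_mA_exp_le_iff:
  assumes "finite A"
  shows "Poly_Mapping.lookup (mA_exp n adj A) \<le> Poly_Mapping.lookup e
    \<longleftrightarrow> (\<forall>i\<in>A. degA n adj A i \<le> Poly_Mapping.lookup e i)"
  using assms by (auto simp: le_fun_def mA_exp_def lookup_sum lookup_single when_def)

lemma degA_singleton:
  assumes "i \<le> n" and "adj i i = 0"
  shows "degA n adj {i} i = vertex_degree n adj i"
  using assms by (simp add: degA_def vertex_degree_def sum.remove[of "{0..n}" i])

lemma degA_pair:
  assumes "i \<le> n" "j \<le> n" "i \<noteq> j" and "adj i i = 0"
  shows "degA n adj {i, j} i = vertex_degree n adj i - adj i j"
proof -
  have "vertex_degree n adj i = degA n adj {i, j} i + (\<Sum>k\<in>{i, j}. adj i k)"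
    unfolding vertex_degree_def degA_def using assms(1,2) by (intro sum.subset_diff) auto
  also have "(\<Sum>k\<in>{i, j}. adj i k) = adj i j"
    using assms(3,4) by simp
  finally show ?thesis by simp
qed

lemma all_small_nonempty_subsets_iff:
  assumes "finite I"
  shows "(\<forall>A. A \<noteq> {} \<and> A \<subseteq> I \<and> card A \<le> 2 \<longrightarrow> P A) \<longleftrightarrow>
    (\<forall>i\<in>I. P {i}) \<and> (\<forall>i\<in>I. \<forall>j\<in>I. i \<noteq> j \<longrightarrow> P {i, j})"
proof (intro iffI allI impI)
  fix A assume P: "(\<forall>i\<in>I. P {i}) \<and> (\<forall>i\<in>I. \<forall>j\<in>I. i \<noteq> j \<longrightarrow> P {i, j})"
    and A: "A \<noteq> {} \<and> A \<subseteq> I \<and> card A \<le> 2"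
  with assms have "card A = 1 \<or> card A = 2"
    by (cases "card A") (auto simp: card_eq_0_iff dest: finite_subset)
  with P A show "P A"
    by (auto simp: card_1_singleton_iff card_2_iff)
qed auto

lemma standard_exps_M1_iff:
  assumes loopless: "\<forall>i\<in>{1..n}. adj i i = 0"
  shows "e \<in> standard_exps n (M1_exps n adj) \<longleftrightarrow> Poly_Mapping.keys e \<subseteq> {1..n}
    \<and> (\<forall>i\<in>{1..n}. Poly_Mapping.lookup e i < vertex_degree n adj i)
    \<and> (\<forall>i\<in>{1..n}. \<forall>j\<in>{1..n}. i \<noteq> j \<longrightarrow>
         \<not> (vertex_degree n adj i - adj i j \<le> Poly_Mapping.lookup e i
            \<and> vertex_degree n adj j - adj j i \<le> Poly_Mapping.lookup e j))"
proof -
  have singleton: "degA n adj {i} i = vertex_degree n adj i" if "i \<in> {1..n}" for i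
    using that loopless by (simp add: degA_singleton)
  have pair: "degA n adj {i, j} i = vertex_degree n adj i - adj i j"
    "degA n adj {i, j} j = vertex_degree n adj j - adj j i"
    if "i \<in> {1..n}" "j \<in> {1..n}" "i \<noteq> j" for i j
    using that loopless degA_pair[of i n j adj] degA_pair[of j n i adj]
    by (simp_all add: insert_commute)
  have "(\<forall>g\<in>M1_exps n adj. \<not> Poly_Mapping.lookup g \<le> Poly_Mapping.lookup e) \<longleftrightarrow>
      (\<forall>A. A \<noteq> {} \<and> A \<subseteq> {1..n} \<and> card A \<le> 2 \<longrightarrow>
         \<not> Poly_Mapping.lookup (mA_exp n adj A) \<le> Poly_Mapping.lookup e)"
    by (auto simp: M1_exps_def)
  also have "\<dots> \<longleftrightarrow> (\<forall>i\<in>{1..n}. \<not> vertex_degree n adj i \<le> Poly_Mapping.lookup e i)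
      \<and> (\<forall>i\<in>{1..n}. \<forall>j\<in>{1..n}. i \<noteq> j \<longrightarrow>
         \<not> (vertex_degree n adj i - adj i j \<le> Poly_Mapping.lookup e i
            \<and> vertex_degree n adj j - adj j i \<le> Poly_Mapping.lookup e j))"
    unfolding all_small_nonempty_subsets_iff[OF finite_atLeastAtMost]
    by (auto simp: lookup_mA_exp_le_iff singleton pair)
  finally show ?thesis
    by (simp add: standard_exps_def not_le)
qed

lemma off_diagonal_le_vertex_degree:
  assumes "\<forall>i\<in>{1..n}. \<forall>j\<in>{1..n}. i \<noteq> j \<longrightarrow> adj i j = b"
    and "i \<in> {1..n}" and "{1..n} \<noteq> {i}"
  shows "b \<le> vertex_degree n adj i"
proof -
  from assms(2,3) obtain j where "j \<in> {1..n}" "j \<noteq> i" by blast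
  with assms(1,2) have "b = adj i j" by simp
  also have "\<dots> \<le> vertex_degree n adj i"
    unfolding vertex_degree_def using \<open>j \<in> {1..n}\<close> by (intro member_le_sum) auto
  finally show ?thesis .
qed

lemma bij_betw_standard_exps_M1:
  assumes loopless: "\<forall>i\<in>{1..n}. adj i i = 0"
    and off_diagonal: "\<forall>i\<in>{1..n}. \<forall>j\<in>{1..n}. i \<noteq> j \<longrightarrow> adj i j = b"
  shows "bij_betw (\<lambda>e. restrict (Poly_Mapping.lookup e) {1..n}) (standard_exps n (M1_exps n adj))
    (at_most_one_large {1..n} (\<lambda>i. vertex_degree n adj i - b) (vertex_degree n adj))"
proof -
  let ?restrict = "\<lambda>e. restrict (Poly_Mapping.lookup e) {1..n}"
  let ?F = "at_most_one_large {1..n} (\<lambda>i. vertex_degree n adj i - b) (vertex_degree n adj)"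
  have standard_iff: "e \<in> standard_exps n (M1_exps n adj)
      \<longleftrightarrow> Poly_Mapping.keys e \<subseteq> {1..n} \<and> ?restrict e \<in> ?F" for e
    unfolding standard_exps_M1_iff[where n = n and adj = adj, OF loopless] at_most_one_large_def
    using off_diagonal by (simp add: PiE_iff)
  have "bij_betw ?restrict {e \<in> {e. Poly_Mapping.keys e \<subseteq> {1..n}}. ?restrict e \<in> ?F}
      {f \<in> PiE {1..n} (\<lambda>_. UNIV). f \<in> ?F}"
    by (rule bij_betw_Collect[OF bij_betw_restrict_lookup]) simp_all
  moreover have "{e \<in> {e. Poly_Mapping.keys e \<subseteq> {1..n}}. ?restrict e \<in> ?F}
      = standard_exps n (M1_exps n adj)"
    using standard_iff by blast
  moreover have "{f \<in> PiE {1..n} (\<lambda>_. UNIV). f \<in> ?F} = ?F"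
    by (auto simp: at_most_one_large_def PiE_iff)
  ultimately show ?thesis by simp
qed

lemma det_trunc_Q:
  assumes "\<forall>i\<in>{1..n}. \<forall>j\<in>{1..n}. i \<noteq> j \<longrightarrow> adj i j = b"
  shows "det (trunc_Q n adj) = (\<Prod>i\<in>{1..n}. int (vertex_degree n adj i) - int b)
    + int b * (\<Sum>i\<in>{1..n}. \<Prod>j\<in>{1..n} - {i}. int (vertex_degree n adj j) - int b)"
proof -
  let ?t = "\<lambda>k. int (vertex_degree n adj (Suc k)) - int b"
  have "trunc_Q n adj = diag_plus_const_mat n ?t (int b)"
    using assms by (intro eq_matI) (auto simp: trunc_Q_def diag_plus_const_mat_def vertex_degree_def)
  moreover have "{1..n} - {Suc k} = Suc ` ({..<n} - {k})" for k
    by (simp add: image_set_diff image_Suc_lessThan)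
  ultimately show ?thesis
    by (simp add: det_diag_plus_const_mat sum.atLeast1_atMost_eq prod.atLeast1_atMost_eq prod.reindex)
qed

theorem theorem1:
  fixes n a b :: nat and r :: "nat \<Rightarrow> nat" and adj :: "nat \<Rightarrow> nat \<Rightarrow> nat"
  assumes "n \<ge> 1" and "a > 0" and "b > 0"
    and "\<forall>i\<in>{1..n}. r i \<le> a"
    and "\<forall>i\<in>{1..n}. adj 0 i = r i \<and> adj i 0 = r i"
    and "\<forall>i\<in>{1..n}. \<forall>j\<in>{1..n}. i \<noteq> j \<longrightarrow> adj i j = b"
    and "\<forall>i\<in>{0..n}. adj i i = 0"
  shows "\<exists>d. quot_dim_eq n (M1 n adj :: 'k::field mpoly set) d \<and> int d = det (trunc_Q n adj)"
proof -
  let ?Std = "standard_exps n (M1_exps n adj)"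
  have "\<forall>i\<in>{1..n}. adj i i = 0" using assms(7) by simp
  note bij = bij_betw_standard_exps_M1[OF this assms(6)]
  hence "finite ?Std"
    using bij_betw_finite finite_at_most_one_large[OF finite_atLeastAtMost] by blast
  hence "quot_dim_eq n (M1 n adj :: 'k mpoly set) (card ?Std)"
    unfolding M1_eq_monomial_ideal by (rule quot_dim_eq_monomial_ideal)
  moreover have "\<forall>i\<in>{1..n}. {1..n} = {i} \<or> b \<le> vertex_degree n adj i"
    using off_diagonal_le_vertex_degree[OF assms(6)] by blast
  hence "int (card ?Std) = det (trunc_Q n adj)"
    using bij_betw_same_card[OF bij] int_card_at_most_one_large[OF finite_atLeastAtMost]
      det_trunc_Q[OF assms(6)] by simp
  ultimately show ?thesis by blast
qed

end
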